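(* Let $G$ and $H$ be finite simple graphs, let $k\ge 0$ be an integer, and let $\delta_H$ be the minimum degree of $H$. If $S_G$ is a global defensive $k$-alliance in $G$, then $S_G\times V_H$ is a global defensive $(k\,n(H)+\delta_H)$-alliance in the lexicographic product $G[H]$. Consequently, $$\gamma^d_{k n(H)+\delta_H}(G[H])\le n(H)\,\gamma^d_k(G).$$
   Context: All graphs are finite and simple; $n(H)=|V_H|$. For $S\subseteq V_G$ and $v\in V_G$, $N_S(v)=\{u\in S: uv\in E_G\}$ and $\bar S=V_G\setminus S$. For an integer $k$, a nonempty $S\subseteq V_G$ is a global defensive $k$-alliance in $G$ if every vertex outside $S$ has a neighbor in $S$ and $|N_S(v)|\ge |N_{\bar S}(v)|+k$ for every $v\in S$; $\gamma^d_k(G)$ is the minimum size of such a set ($\infty$ if none exists). The lexicographic product $G[H]$ has vertex set $V_G\times V_H$, with $(g_1,h_1)\sim(g_2,h_2)$ iff $g_1g_2\in E_G$, or $g_1=g_2$ and $h_1h_2\in E_H$. *)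

theory Defs
  imports Main "HOL-Library.Extended_Nat"
begin

definition simple_graph :: "'a set \<Rightarrow> ('a \<Rightarrow> 'a \<Rightarrow> bool) \<Rightarrow> bool" where
  "simple_graph V E \<longleftrightarrow> finite V \<and> V \<noteq> {} \<and>
     (\<forall>u v. E u v \<longrightarrow> u \<in> V \<and> v \<in> V) \<and>
     (\<forall>u v. E u v \<longrightarrow> E v u) \<and> (\<forall>v. \<not> E v v)"

definition nbrs_in :: "('a \<Rightarrow> 'a \<Rightarrow> bool) \<Rightarrow> 'a set \<Rightarrow> 'a \<Rightarrow> 'a set" where
  "nbrs_in E S v = {u \<in> S. E u v}"

definition degree :: "'a set \<Rightarrow> ('a \<Rightarrow> 'a \<Rightarrow> bool) \<Rightarrow> 'a \<Rightarrow> nat" where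
  "degree V E v = card (nbrs_in E V v)"

definition min_degree :: "'a set \<Rightarrow> ('a \<Rightarrow> 'a \<Rightarrow> bool) \<Rightarrow> nat" where
  "min_degree V E = Min (degree V E ` V)"

definition global_def_alliance ::
  "'a set \<Rightarrow> ('a \<Rightarrow> 'a \<Rightarrow> bool) \<Rightarrow> int \<Rightarrow> 'a set \<Rightarrow> bool" where
  "global_def_alliance V E k S \<longleftrightarrow> S \<noteq> {} \<and> S \<subseteq> V \<and>
     (\<forall>v \<in> V - S. \<exists>u \<in> S. E u v) \<and>
     (\<forall>v \<in> S. int (card (nbrs_in E S v)) \<ge> int (card (nbrs_in E (V - S) v)) + k)"

text \<open>Global defensive k-alliance number; \<infinity> if no such set exists.\<close>
definition gamma_d :: "'a set \<Rightarrow> ('a \<Rightarrow> 'a \<Rightarrow> bool) \<Rightarrow> int \<Rightarrow> enat" where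
  "gamma_d V E k = (INF S \<in> {S. global_def_alliance V E k S}. enat (card S))"

definition lex_edge :: "'a set \<Rightarrow> ('a \<Rightarrow> 'a \<Rightarrow> bool) \<Rightarrow> 'b set \<Rightarrow> ('b \<Rightarrow> 'b \<Rightarrow> bool)
    \<Rightarrow> 'a \<times> 'b \<Rightarrow> 'a \<times> 'b \<Rightarrow> bool" where
  "lex_edge VG EG VH EH x y \<longleftrightarrow> x \<in> VG \<times> VH \<and> y \<in> VG \<times> VH \<and>
     (EG (fst x) (fst y) \<or> (fst x = fst y \<and> EH (snd x) (snd y)))"

end

theory Submission
  imports Defs
begin

text \<open>A vertex \<open>(g, h)\<close> of \<open>G[H]\<close> sees the whole fibre \<open>{g'} \<times> V\<^sub>H\<close> of every neighbour \<open>g'\<close>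
  of \<open>g\<close>, and inside its own fibre it sees exactly the neighbours of \<open>h\<close> in \<open>H\<close>. Hence for
  \<open>S\<^sub>G \<times> V\<^sub>H\<close> the count \<open>|N\<^sub>S(v)| - |N\<^sub>S\<^sub>\<bar>(v)|\<close> is \<open>n(H)\<close> times the corresponding count in \<open>G\<close>
  plus \<open>deg\<^sub>H h \<ge> \<delta>\<^sub>H\<close>, while domination lifts fibrewise.\<close>

lemma nbrs_in_lex_edge_own_fibre:
  assumes "T \<subseteq> VG" "g \<in> T" "h \<in> VH"
  shows "nbrs_in (lex_edge VG EG VH EH) (T \<times> VH) (g, h)
           = nbrs_in EG T g \<times> VH \<union> {g} \<times> nbrs_in EH VH h"
  using assms by (auto simp: nbrs_in_def lex_edge_def)

lemma nbrs_in_lex_edge_other_fibres: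
  assumes "T \<subseteq> VG" "g \<in> VG" "g \<notin> T" "h \<in> VH"
  shows "nbrs_in (lex_edge VG EG VH EH) (T \<times> VH) (g, h) = nbrs_in EG T g \<times> VH"
  using assms by (auto simp: nbrs_in_def lex_edge_def)

lemma card_nbrs_in_lex_edge_own_fibre:
  assumes G: "simple_graph VG EG" and H: "simple_graph VH EH"
    and "T \<subseteq> VG" "g \<in> T" "h \<in> VH"
  shows "card (nbrs_in (lex_edge VG EG VH EH) (T \<times> VH) (g, h))
           = card (nbrs_in EG T g) * card VH + degree VH EH h"
proof -
  have "finite (nbrs_in EG T g)"
    using G \<open>T \<subseteq> VG\<close> by (auto simp: simple_graph_def nbrs_in_def intro: finite_subset)
  moreover have "finite VH" "finite (nbrs_in EH VH h)"
    using H by (auto simp: simple_graph_def nbrs_in_def)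
  moreover have "nbrs_in EG T g \<times> VH \<inter> {g} \<times> nbrs_in EH VH h = {}"
    using G by (auto simp: simple_graph_def nbrs_in_def)
  ultimately show ?thesis
    using assms(3-5)
    by (simp add: nbrs_in_lex_edge_own_fibre card_Un_disjoint card_cartesian_product degree_def)
qed

lemma min_degree_le_degree:
  assumes "finite V" "v \<in> V"
  shows "min_degree V E \<le> degree V E v"
  using assms by (simp add: min_degree_def)

lemma global_def_alliance_lex_product:
  assumes G: "simple_graph VG EG" and H: "simple_graph VH EH"
    and S: "global_def_alliance VG EG k S"
  shows "global_def_alliance (VG \<times> VH) (lex_edge VG EG VH EH)
           (k * int (card VH) + int (min_degree VH EH)) (S \<times> VH)"
proof -
  let ?E = "lex_edge VG EG VH EH" and ?n = "int (card VH)"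
  have "VH \<noteq> {}" "finite VH" using H by (auto simp: simple_graph_def)
  have "S \<noteq> {}" and SV: "S \<subseteq> VG" and dom: "\<forall>g \<in> VG - S. \<exists>u \<in> S. EG u g"
    and def: "\<forall>g \<in> S. int (card (nbrs_in EG S g)) \<ge> int (card (nbrs_in EG (VG - S) g)) + k"
    using S by (auto simp: global_def_alliance_def)
  have complement: "VG \<times> VH - S \<times> VH = (VG - S) \<times> VH" by blast
  have "\<exists>u \<in> S \<times> VH. ?E u (g, h)" if "g \<in> VG - S" "h \<in> VH" for g h
  proof -
    obtain u where "u \<in> S" "EG u g" using dom \<open>g \<in> VG - S\<close> by blast
    then show ?thesis using that SV by (intro bexI[of _ "(u, h)"]) (auto simp: lex_edge_def)
  qed
  moreover have "int (card (nbrs_in ?E (S \<times> VH) (g, h)))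
      \<ge> int (card (nbrs_in ?E ((VG - S) \<times> VH) (g, h))) + (k * ?n + int (min_degree VH EH))"
    if "g \<in> S" "h \<in> VH" for g h
  proof -
    have "(int (card (nbrs_in EG (VG - S) g)) + k) * ?n \<le> int (card (nbrs_in EG S g)) * ?n"
      using def \<open>g \<in> S\<close> by (simp add: mult_right_mono)
    moreover have "min_degree VH EH \<le> degree VH EH h"
      using min_degree_le_degree \<open>finite VH\<close> \<open>h \<in> VH\<close> .
    moreover have "nbrs_in ?E ((VG - S) \<times> VH) (g, h) = nbrs_in EG (VG - S) g \<times> VH"
      using that SV by (intro nbrs_in_lex_edge_other_fibres) auto
    ultimately show ?thesis
      using that SV
      by (simp add: card_nbrs_in_lex_edge_own_fibre[OF G H] card_cartesian_product algebra_simps)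
  qed
  ultimately show ?thesis
    using \<open>S \<noteq> {}\<close> \<open>VH \<noteq> {}\<close> SV unfolding global_def_alliance_def complement by auto
qed

lemma gamma_d_le_card:
  "global_def_alliance V E k S \<Longrightarrow> gamma_d V E k \<le> enat (card S)"
  unfolding gamma_d_def by (auto intro: INF_lower)

lemma gamma_d_attained:
  assumes "gamma_d V E k \<noteq> \<infinity>"
  obtains S where "global_def_alliance V E k S" "gamma_d V E k = enat (card S)"
proof -
  let ?A = "(\<lambda>S. enat (card S)) ` {S. global_def_alliance V E k S}"
  have "?A \<noteq> {}"
  proof
    assume "?A = {}"
    then have "gamma_d V E k = \<infinity>" by (simp add: gamma_d_def Inf_enat_def)
    with assms show False ..
  qed
  then have "Inf ?A \<in> ?A" by (auto intro: wellorder_InfI)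
  with that show ?thesis unfolding gamma_d_def by auto
qed

text \<open>\<open>c > 0\<close> is needed for the case \<open>\<gamma>\<^sup>d = \<infinity>\<close>, since \<open>0 * \<infinity> = 0\<close> in \<open>enat\<close>.\<close>

lemma gamma_d_le_mult_gamma_d:
  assumes "c > 0"
    and "\<And>S. global_def_alliance V E k S \<Longrightarrow>
           global_def_alliance V' E' k' (f S) \<and> card (f S) \<le> c * card S"
  shows "gamma_d V' E' k' \<le> enat c * gamma_d V E k"
proof (cases "gamma_d V E k = \<infinity>")
  case True
  then show ?thesis using \<open>c > 0\<close> by (simp add: imult_is_infinity zero_enat_def)
next
  case False
  then obtain S where S: "global_def_alliance V E k S" "gamma_d V E k = enat (card S)"
    by (rule gamma_d_attained)
  then have "gamma_d V' E' k' \<le> enat (card (f S))" using assms(2) gamma_d_le_card by blast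
  also have "\<dots> \<le> enat c * gamma_d V E k" using assms(2)[OF S(1)] S(2) by simp
  finally show ?thesis .
qed

theorem mainTheorem3:
  fixes VG :: "'a set" and EG :: "'a \<Rightarrow> 'a \<Rightarrow> bool"
    and VH :: "'b set" and EH :: "'b \<Rightarrow> 'b \<Rightarrow> bool"
    and k :: int
  assumes "simple_graph VG EG" and "simple_graph VH EH" and "k \<ge> 0"
  shows "(\<forall>S. global_def_alliance VG EG k S \<longrightarrow>
            global_def_alliance (VG \<times> VH) (lex_edge VG EG VH EH)
              (k * int (card VH) + int (min_degree VH EH)) (S \<times> VH))
       \<and> gamma_d (VG \<times> VH) (lex_edge VG EG VH EH) (k * int (card VH) + int (min_degree VH EH))
           \<le> enat (card VH) * gamma_d VG EG k"
proof -
  have lift: "global_def_alliance (VG \<times> VH) (lex_edge VG EG VH EH)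
                (k * int (card VH) + int (min_degree VH EH)) (S \<times> VH)"
    if "global_def_alliance VG EG k S" for S
    using global_def_alliance_lex_product assms(1,2) that .
  have "card VH > 0" using assms(2) by (auto simp: simple_graph_def)
  then have "gamma_d (VG \<times> VH) (lex_edge VG EG VH EH) (k * int (card VH) + int (min_degree VH EH))
               \<le> enat (card VH) * gamma_d VG EG k"
    by (rule gamma_d_le_mult_gamma_d[where f = "\<lambda>S. S \<times> VH"])
       (simp add: lift card_cartesian_product)
  with lift show ?thesis by blast
qed

end
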